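(* Let $L$ be a Latin array of order $n$ that has a diagonal of weight $n-2$ and has no diagonal of weight greater than $n-2$. If $L$ has a diagonal of type B, then there exists a diagonal of type A that can be reached from it by a sequence of $\#$-swaps.
   Context: A Latin array of order $n$ is an $n\times n$ matrix each of whose cells contains a symbol (from an arbitrary set of symbols), such that no symbol occurs more than once in any row or in any column. A diagonal of an $n\times n$ array is a selection of $n$ cells, one from each row and one from each column; its weight is the number of distinct symbols on it. A diagonal of weight $n-2$ is of type A if two symbols each occur exactly twice on it (all others once), and of type B if one symbol occurs exactly three times on it (all others once). A $\#$-swap is the following operation: given a diagonal $T$ of weight $w$ and two of its cells $(i_0,j_0)$ and $(i_1,j_1)$ such that the remaining $n-2$ cells of $T$ still carry $w$ distinct symbols, replace these two cells by $(i_0,j_1)$ and $(i_1,j_0)$, obtaining a new diagonal (of weight at least $w$). *)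

theory Defs
  imports "HOL-Combinatorics.Permutations"
begin

definition latin_array :: "nat \<Rightarrow> (nat \<Rightarrow> nat \<Rightarrow> 'a) \<Rightarrow> bool" where
  "latin_array n L \<longleftrightarrow>
     (\<forall>i<n. \<forall>j<n. \<forall>j'<n. j \<noteq> j' \<longrightarrow> L i j \<noteq> L i j') \<and>
     (\<forall>j<n. \<forall>i<n. \<forall>i'<n. i \<noteq> i' \<longrightarrow> L i j \<noteq> L i' j)"

definition is_diagonal :: "nat \<Rightarrow> (nat \<Rightarrow> nat) \<Rightarrow> bool" where
  "is_diagonal n s \<longleftrightarrow> s permutes {..<n}"

definition diag_symbols :: "nat \<Rightarrow> (nat \<Rightarrow> nat \<Rightarrow> 'a) \<Rightarrow> (nat \<Rightarrow> nat) \<Rightarrow> 'a set" where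
  "diag_symbols n L s = (\<lambda>i. L i (s i)) ` {..<n}"

definition weight :: "nat \<Rightarrow> (nat \<Rightarrow> nat \<Rightarrow> 'a) \<Rightarrow> (nat \<Rightarrow> nat) \<Rightarrow> nat" where
  "weight n L s = card (diag_symbols n L s)"

definition occ :: "nat \<Rightarrow> (nat \<Rightarrow> nat \<Rightarrow> 'a) \<Rightarrow> (nat \<Rightarrow> nat) \<Rightarrow> 'a \<Rightarrow> nat" where
  "occ n L s x = card {i. i < n \<and> L i (s i) = x}"

definition type_A :: "nat \<Rightarrow> (nat \<Rightarrow> nat \<Rightarrow> 'a) \<Rightarrow> (nat \<Rightarrow> nat) \<Rightarrow> bool" where
  "type_A n L s \<longleftrightarrow> is_diagonal n s \<and> weight n L s = n - 2 \<and>
     (\<exists>x y. x \<noteq> y \<and> occ n L s x = 2 \<and> occ n L s y = 2 \<and>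
        (\<forall>z \<in> diag_symbols n L s. z \<noteq> x \<and> z \<noteq> y \<longrightarrow> occ n L s z = 1))"

definition type_B :: "nat \<Rightarrow> (nat \<Rightarrow> nat \<Rightarrow> 'a) \<Rightarrow> (nat \<Rightarrow> nat) \<Rightarrow> bool" where
  "type_B n L s \<longleftrightarrow> is_diagonal n s \<and> weight n L s = n - 2 \<and>
     (\<exists>x. occ n L s x = 3 \<and>
        (\<forall>z \<in> diag_symbols n L s. z \<noteq> x \<longrightarrow> occ n L s z = 1))"

definition hash_swap :: "nat \<Rightarrow> (nat \<Rightarrow> nat \<Rightarrow> 'a) \<Rightarrow> (nat \<Rightarrow> nat) \<Rightarrow> (nat \<Rightarrow> nat) \<Rightarrow> bool" where
  "hash_swap n L s t \<longleftrightarrow> is_diagonal n s \<and>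
     (\<exists>i0 i1. i0 < n \<and> i1 < n \<and> i0 \<noteq> i1 \<and>
        card ((\<lambda>i. L i (s i)) ` ({..<n} - {i0, i1})) = weight n L s \<and>
        t = s \<circ> Transposition.transpose i0 i1)"

end

theory Submission
  imports Defs
begin

(* Let the triple symbol of the type B diagonal s lie in rows a, b, c, and #-swap the cells of
   rows a and b. Since no diagonal has weight above n - 2, both new symbols already occur in the
   other n - 2 rows. If they differ, the new diagonal has type A. If they coincide, it has type B
   again, its triple symbol L a (s b) lying in rows a, b and a third row r; the Latin property of
   row a shows that r has not been moved so far, so the argument repeats with r in place of b.
   Every round moves one more row, hence the process stops. *)

lemma inj_on_fibre: "inj_on g R \<Longrightarrow> u \<in> R \<Longrightarrow> {i \<in> R. g i = g u} = {u}"
  by (auto simp: inj_on_def)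

lemma card_lessThan_Diff_pair: "a < n \<Longrightarrow> w < n \<Longrightarrow> a \<noteq> w \<Longrightarrow> card ({..<n} - {a, w}) = n - 2"
  by (simp add: card_Diff_subset)

lemma diag_symbols_off_two_rows:
  assumes "a < n" "w < n"
    and "L a (t a) \<in> (\<lambda>i. L i (t i)) ` ({..<n} - {a, w})"
    and "L w (t w) \<in> (\<lambda>i. L i (t i)) ` ({..<n} - {a, w})"
  shows "diag_symbols n L t = (\<lambda>i. L i (t i)) ` ({..<n} - {a, w})"
proof -
  define R where "R = {..<n} - {a, w}"
  have "{..<n} = insert a (insert w R)"
    using assms(1,2) unfolding R_def by auto
  then have "diag_symbols n L t = insert (L a (t a)) (insert (L w (t w)) ((\<lambda>i. L i (t i)) ` R))"
    unfolding diag_symbols_def by simp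
  with assms(3,4) show ?thesis
    unfolding R_def by (simp add: insert_absorb)
qed

lemma weight_off_two_rows:
  assumes "a < n" "w < n" "a \<noteq> w"
    and "inj_on (\<lambda>i. L i (t i)) ({..<n} - {a, w})"
    and "L a (t a) \<in> (\<lambda>i. L i (t i)) ` ({..<n} - {a, w})"
    and "L w (t w) \<in> (\<lambda>i. L i (t i)) ` ({..<n} - {a, w})"
  shows "weight n L t = n - 2"
  using assms by (simp add: weight_def diag_symbols_off_two_rows card_image card_lessThan_Diff_pair)

lemma maximal_weight_repeats_off_two_rows:
  assumes max: "\<forall>s. is_diagonal n s \<longrightarrow> weight n L s \<le> n - 2"
    and t: "is_diagonal n t" and "a < n" "w < n" "a \<noteq> w"
    and inj: "inj_on (\<lambda>i. L i (t i)) ({..<n} - {a, w})"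
    and "i \<in> {a, w}"
  shows "L i (t i) \<in> (\<lambda>i. L i (t i)) ` ({..<n} - {a, w})"
proof (rule ccontr)
  let ?g = "\<lambda>i. L i (t i)" and ?R = "{..<n} - {a, w}"
  assume "L i (t i) \<notin> ?g ` ?R"
  then have "n - 1 = card (insert (L i (t i)) (?g ` ?R))"
    using assms(3-5) inj by (simp add: card_image card_lessThan_Diff_pair)
  also have "\<dots> \<le> weight n L t"
    unfolding weight_def diag_symbols_def using assms(3,4,7) by (intro card_mono) auto
  moreover have "weight n L t \<le> n - 2"
    using max t by blast
  ultimately show False
    using assms(3-5) by linarith
qed

lemma type_A_off_two_rows:
  assumes "is_diagonal n t" "a < n" "w < n" "a \<noteq> w"
    and inj: "inj_on (\<lambda>i. L i (t i)) ({..<n} - {a, w})"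
    and a_rep: "L a (t a) \<in> (\<lambda>i. L i (t i)) ` ({..<n} - {a, w})"
    and w_rep: "L w (t w) \<in> (\<lambda>i. L i (t i)) ` ({..<n} - {a, w})"
    and "L a (t a) \<noteq> L w (t w)"
  shows "type_A n L t"
proof -
  let ?g = "\<lambda>i. L i (t i)" and ?R = "{..<n} - {a, w}"
  have fibre: "{i. i < n \<and> ?g i = z} = {i \<in> ?R. ?g i = z} \<union> {i \<in> {a, w}. ?g i = z}" for z
    using assms(2,3) by blast
  have occ_repeated: "occ n L t (?g v) = 2" if v: "v \<in> {a, w}" for v
  proof -
    have "?g v \<in> ?g ` ?R"
      using v a_rep w_rep by auto
    then obtain u where u: "?g v = ?g u" "u \<in> ?R"
      by (rule imageE)
    have off: "{i \<in> ?R. ?g i = ?g v} = {u}"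
      using inj_on_fibre[OF inj u(2)] u(1) by simp
    have on: "{i \<in> {a, w}. ?g i = ?g v} = {v}"
      using v assms(8) by auto
    have "{i. i < n \<and> ?g i = ?g v} = {u, v}"
      unfolding fibre off on by auto
    moreover have "u \<noteq> v"
      using u(2) v by auto
    ultimately show ?thesis
      unfolding occ_def by simp
  qed
  have occ_single: "occ n L t z = 1"
    if z: "z \<in> diag_symbols n L t" and z_other: "z \<noteq> ?g a" "z \<noteq> ?g w" for z
  proof -
    obtain r where r: "z = ?g r" "r \<in> {..<n}"
      using z unfolding diag_symbols_def by (rule imageE)
    with z_other have "r \<in> ?R"
      by auto
    then have "{i \<in> ?R. ?g i = z} = {r}"
      using inj_on_fibre[OF inj] r(1) by simp
    moreover have "{i \<in> {a, w}. ?g i = z} = {}"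
      using z_other by auto
    ultimately show ?thesis
      unfolding occ_def fibre by simp
  qed
  have "weight n L t = n - 2"
    using assms(2-7) by (rule weight_off_two_rows)
  then show ?thesis
    unfolding type_A_def using assms(1,8) occ_repeated occ_single
    by (intro conjI exI[of _ "?g a"] exI[of _ "?g w"]) auto
qed

definition moved_rows :: "nat \<Rightarrow> (nat \<Rightarrow> nat) \<Rightarrow> (nat \<Rightarrow> nat) \<Rightarrow> nat set" where
  "moved_rows n s e = {i. i < n \<and> e i \<noteq> s i}"

lemma card_moved_rows_le: "card (moved_rows n s e) \<le> n"
proof -
  have "moved_rows n s e \<subseteq> {..<n}"
    unfolding moved_rows_def by auto
  then show ?thesis
    by (metis card_lessThan card_mono finite_lessThan)
qed

lemma moved_rows_transpose_psubset:
  assumes "is_diagonal n s" "is_diagonal n e" "a < n" "w < n" "a \<noteq> w" "e w = s w"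
  shows "moved_rows n s e \<subset> moved_rows n s (e \<circ> Transposition.transpose a w)"
proof -
  have s_ne: "s w \<noteq> s a" and e_ne: "e a \<noteq> e w"
    using assms(1,2,5) unfolding is_diagonal_def by (metis permutes_inj injD)+
  have "moved_rows n s e \<subseteq> moved_rows n s (e \<circ> Transposition.transpose a w)"
    unfolding moved_rows_def using s_ne assms(6) by (auto simp: Transposition.transpose_def)
  moreover have "w \<in> moved_rows n s (e \<circ> Transposition.transpose a w) - moved_rows n s e"
    unfolding moved_rows_def using assms(4,6) e_ne by simp
  ultimately show ?thesis
    by blast
qed

lemma is_diagonal_transpose:
  "is_diagonal n e \<Longrightarrow> a < n \<Longrightarrow> w < n \<Longrightarrow> is_diagonal n (e \<circ> Transposition.transpose a w)"
  unfolding is_diagonal_def by (simp add: permutes_compose permutes_swap_id)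

text \<open>The state of the process after some rounds, with w in the role of b. The last clause is
  the invariant that keeps the process from returning to a moved row.\<close>
definition swap_chain ::
    "nat \<Rightarrow> (nat \<Rightarrow> nat \<Rightarrow> 'a) \<Rightarrow> (nat \<Rightarrow> nat) \<Rightarrow> nat \<Rightarrow> (nat \<Rightarrow> nat) \<Rightarrow> nat \<Rightarrow> bool" where
  "swap_chain n L s a e w \<longleftrightarrow>
     (hash_swap n L)\<^sup>*\<^sup>* s e \<and> is_diagonal n s \<and> is_diagonal n e \<and>
     a < n \<and> w < n \<and> a \<noteq> w \<and> e w = s w \<and> L w (e w) = L a (e a) \<and>
     inj_on (\<lambda>i. L i (e i)) ({..<n} - {a, w}) \<and>
     (\<forall>r \<in> moved_rows n s e. r \<noteq> a \<longrightarrow> L r (e r) = L a (s r))"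

lemma type_B_swap_chain:
  assumes "type_B n L s"
  obtains a w where "swap_chain n L s a s w"
proof -
  let ?g = "\<lambda>i. L i (s i)"
  obtain x where s: "is_diagonal n s" and occ_x: "occ n L s x = 3"
    and occ_other: "\<forall>z \<in> diag_symbols n L s. z \<noteq> x \<longrightarrow> occ n L s z = 1"
    using assms unfolding type_B_def by blast
  obtain a b c where abc: "{i. i < n \<and> ?g i = x} = {a, b, c}" "a \<noteq> b" "b \<noteq> c" "a \<noteq> c"
    using occ_x unfolding occ_def card_3_iff by blast
  have "a \<in> {i. i < n \<and> ?g i = x}" "b \<in> {i. i < n \<and> ?g i = x}"
    unfolding abc(1) by simp_all
  then have rows: "a < n" "b < n" "?g a = x" "?g b = x"
    by simp_all
  have "inj_on ?g ({..<n} - {a, b})"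
  proof (rule inj_onI)
    fix i j
    assume i: "i \<in> {..<n} - {a, b}" and j: "j \<in> {..<n} - {a, b}" and eq: "?g i = ?g j"
    let ?F = "{k. k < n \<and> ?g k = ?g i}"
    have "i \<in> ?F" "j \<in> ?F"
      using i j eq by auto
    show "i = j"
    proof (cases "?g i = x")
      case True
      then show ?thesis
        using \<open>i \<in> ?F\<close> \<open>j \<in> ?F\<close> i j abc(1) by auto
    next
      case False
      have "?g i \<in> diag_symbols n L s"
        using i unfolding diag_symbols_def by auto
      with False occ_other have "card ?F = 1"
        unfolding occ_def by auto
      then show ?thesis
        using \<open>i \<in> ?F\<close> \<open>j \<in> ?F\<close> by (metis card_1_singletonE singletonD)
    qed
  qed
  then have "swap_chain n L s a s b"
    unfolding swap_chain_def moved_rows_def using s rows abc(2) by auto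
  then show ?thesis
    by (rule that)
qed

lemma swap_chain_hash_swap:
  assumes max: "\<forall>s. is_diagonal n s \<longrightarrow> weight n L s \<le> n - 2"
    and "swap_chain n L s a e w"
  shows "hash_swap n L e (e \<circ> Transposition.transpose a w)"
proof -
  let ?g = "\<lambda>i. L i (e i)" and ?R = "{..<n} - {a, w}"
  have e: "is_diagonal n e" "a < n" "w < n" "a \<noteq> w" and inj: "inj_on ?g ?R"
    and rep: "?g w = ?g a"
    using assms(2) unfolding swap_chain_def by auto
  have "?g a \<in> ?g ` ?R"
    using maximal_weight_repeats_off_two_rows[OF max e inj] by simp
  then have "weight n L e = card (?g ` ?R)"
    unfolding weight_def using diag_symbols_off_two_rows[of a n w L e] e(2,3) rep by simp
  then show ?thesis
    unfolding hash_swap_def using e by auto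
qed

lemma swap_chain_reaches_transpose:
  assumes "\<forall>s. is_diagonal n s \<longrightarrow> weight n L s \<le> n - 2"
    and "swap_chain n L s a e w"
  shows "(hash_swap n L)\<^sup>*\<^sup>* s (e \<circ> Transposition.transpose a w)"
proof -
  have "(hash_swap n L)\<^sup>*\<^sup>* s e"
    using assms(2) unfolding swap_chain_def by simp
  then show ?thesis
    using swap_chain_hash_swap[OF assms] by (rule rtranclp.rtrancl_into_rtrancl[of "hash_swap n L"])
qed

lemma swap_chain_transpose_inj_on:
  assumes "swap_chain n L s a e w"
  shows "inj_on (\<lambda>i. L i ((e \<circ> Transposition.transpose a w) i)) ({..<n} - {a, w})"
proof -
  have "inj_on (\<lambda>i. L i (e i)) ({..<n} - {a, w})"
    using assms unfolding swap_chain_def by simp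
  then show ?thesis
    by (rule inj_on_cong[THEN iffD1, rotated]) simp
qed

lemma swap_chain_transpose_type_A:
  assumes max: "\<forall>s. is_diagonal n s \<longrightarrow> weight n L s \<le> n - 2"
    and chain: "swap_chain n L s a e w"
    and "L a (e w) \<noteq> L w (e a)"
  shows "type_A n L (e \<circ> Transposition.transpose a w)"
proof -
  let ?t = "e \<circ> Transposition.transpose a w"
  have e: "is_diagonal n e" "a < n" "w < n" "a \<noteq> w"
    using chain unfolding swap_chain_def by auto
  have t: "is_diagonal n ?t"
    using e(1-3) by (rule is_diagonal_transpose)
  have inj: "inj_on (\<lambda>i. L i (?t i)) ({..<n} - {a, w})"
    using chain by (rule swap_chain_transpose_inj_on)
  have rep: "L i (?t i) \<in> (\<lambda>i. L i (?t i)) ` ({..<n} - {a, w})" if "i \<in> {a, w}" for i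
    using maximal_weight_repeats_off_two_rows[where t = ?t and L = L, OF max t e(2-4) inj that] .
  show ?thesis
    using assms(3)
    by (intro type_A_off_two_rows[where t = ?t and L = L, OF t e(2-4) inj] rep) simp_all
qed

lemma swap_chain_row_unmoved:
  assumes latin: "latin_array n L"
    and chain: "swap_chain n L s a e w"
    and r: "r \<in> {..<n} - {a, w}"
    and symbol: "L r (e r) = L a (s w)"
  shows "e r = s r"
proof (rule ccontr)
  have s: "s permutes {..<n}" and a: "a < n" and w: "w < n"
    and moved: "\<forall>r \<in> moved_rows n s e. r \<noteq> a \<longrightarrow> L r (e r) = L a (s r)"
    using chain unfolding swap_chain_def is_diagonal_def by auto
  assume "e r \<noteq> s r"
  then have "L a (s r) = L a (s w)"
    using moved symbol r unfolding moved_rows_def by auto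
  moreover have "s r < n" "s w < n"
    using permutes_in_image[OF s] r w by auto
  ultimately have "s r = s w"
    using latin a unfolding latin_array_def by blast
  then have "r = w"
    using s by (metis permutes_inj injD)
  with r show False
    by simp
qed

lemma inj_on_exchange:
  assumes inj: "inj_on g R" and r: "r \<in> R" and "w \<notin> R"
    and agree: "\<And>i. i \<in> R \<Longrightarrow> h i = g i" and hw: "h w = g r"
  shows "inj_on h (insert w (R - {r}))"
proof -
  have inj_h: "inj_on h R"
    using inj by (rule inj_on_cong[THEN iffD2, rotated]) (rule agree)
  have "h w \<notin> h ` (R - {r})"
  proof
    assume "h w \<in> h ` (R - {r})"
    then obtain i where "h w = h i" "i \<in> R - {r}"
      by (rule imageE)
    then have "g r = g i" "i \<in> R - {r}"
      using agree hw by simp_all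
    with inj r show False
      by (auto simp: inj_on_def)
  qed
  with inj_h \<open>w \<notin> R\<close> show ?thesis
    by (simp add: inj_on_insert inj_on_diff)
qed

lemma swap_chain_transpose_continues:
  assumes latin: "latin_array n L"
    and max: "\<forall>s. is_diagonal n s \<longrightarrow> weight n L s \<le> n - 2"
    and chain: "swap_chain n L s a e w"
    and same: "L a (e w) = L w (e a)"
  obtains r where "swap_chain n L s a (e \<circ> Transposition.transpose a w) r"
proof -
  let ?t = "e \<circ> Transposition.transpose a w" and ?R = "{..<n} - {a, w}"
  let ?g = "\<lambda>i. L i (e i)" and ?h = "\<lambda>i. L i (?t i)"
  have s: "is_diagonal n s" and e: "is_diagonal n e"
    and rows: "a < n" "w < n" "a \<noteq> w" and w_unmoved: "e w = s w"
    and inj: "inj_on ?g ?R" and moved: "\<forall>r \<in> moved_rows n s e. r \<noteq> a \<longrightarrow> ?g r = L a (s r)"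
    using chain unfolding swap_chain_def by auto
  have t: "is_diagonal n ?t"
    using e rows(1,2) by (rule is_diagonal_transpose)
  have inj_t: "inj_on ?h ?R"
    using chain by (rule swap_chain_transpose_inj_on)
  have "?h a \<in> ?h ` ?R"
    using maximal_weight_repeats_off_two_rows[where t = ?t and L = L and i = a, OF max t rows inj_t]
    by simp
  then obtain r where r: "?h a = ?h r" "r \<in> ?R"
    by (rule imageE)
  have g_r: "?g r = L a (s w)"
    using r w_unmoved by simp
  have "{..<n} - {a, r} = insert w (?R - {r})"
    using r(2) rows by auto
  moreover have "inj_on ?h (insert w (?R - {r}))"
    using inj r(2) by (rule inj_on_exchange) (use g_r same w_unmoved in simp_all)
  ultimately have inj_r: "inj_on ?h ({..<n} - {a, r})"
    by simp
  have moved_t: "?h i = L a (s i)" if "i \<in> moved_rows n s ?t" "i \<noteq> a" for i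
  proof (cases "i = w")
    case True
    then show ?thesis
      using same w_unmoved by simp
  next
    case False
    with that have "i \<in> moved_rows n s e"
      unfolding moved_rows_def by simp
    with False that(2) moved show ?thesis
      by simp
  qed
  have "swap_chain n L s a ?t r"
    unfolding swap_chain_def
    using swap_chain_reaches_transpose[OF max chain] swap_chain_row_unmoved[OF latin chain r(2) g_r]
      s t rows r inj_r moved_t
    by auto
  then show ?thesis
    by (rule that)
qed

lemma swap_chain_reaches_type_A:
  assumes latin: "latin_array n L"
    and max: "\<forall>s. is_diagonal n s \<longrightarrow> weight n L s \<le> n - 2"
    and "swap_chain n L s a e w"
  shows "\<exists>t. type_A n L t \<and> (hash_swap n L)\<^sup>*\<^sup>* s t"
  using assms(3)
proof (induction "n - card (moved_rows n s e)" arbitrary: e w rule: less_induct)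
  case less
  let ?t = "e \<circ> Transposition.transpose a w"
  show ?case
  proof (cases "L a (e w) = L w (e a)")
    case True
    then obtain r where chain: "swap_chain n L s a ?t r"
      using swap_chain_transpose_continues[OF latin max less.prems] by blast
    have "moved_rows n s e \<subset> moved_rows n s ?t"
      using less.prems unfolding swap_chain_def by (intro moved_rows_transpose_psubset) auto
    then have "card (moved_rows n s e) < card (moved_rows n s ?t)"
      by (rule psubset_card_mono[rotated]) (simp add: moved_rows_def)
    then have "n - card (moved_rows n s ?t) < n - card (moved_rows n s e)"
      using card_moved_rows_le[of n s ?t] by linarith
    then show ?thesis
      using less.hyps chain by blast
  next
    case False
    then show ?thesis
      using swap_chain_transpose_type_A[OF max less.prems] swap_chain_reaches_transpose[OF max less.prems]
      by blast
  qed
qed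

theorem lemma2p2:
  fixes n :: nat and L :: "nat \<Rightarrow> nat \<Rightarrow> 'a"
  assumes "latin_array n L"
    and "\<exists>s. is_diagonal n s \<and> weight n L s = n - 2"
    and "\<forall>s. is_diagonal n s \<longrightarrow> weight n L s \<le> n - 2"
    and "type_B n L s"
  shows "\<exists>t. type_A n L t \<and> (hash_swap n L)\<^sup>*\<^sup>* s t"
proof -
  obtain a w where "swap_chain n L s a s w"
    using assms(4) by (rule type_B_swap_chain)
  then show ?thesis
    using assms(1,3) swap_chain_reaches_type_A by blast
qed

end
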